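(* Let $(A,\succ,\prec)$ be a Leibniz-dendriform algebra with associated Leibniz algebra $(A,\circ)$ and let $r\in A\otimes A$ be skew-symmetric ($\tau(r)=-r$). The following are equivalent: (a) $S(r)=0$; (b) for all $\zeta,\eta\in A^*$: $T_r(\zeta)\circ T_r(\eta)=T_r\big(L_\succ^*(T_r(\zeta))\eta-L_\odot^*(T_r(\eta))\zeta\big)$ (i.e. $T_r$ is an $\mathcal O$-operator on $(A,\circ)$ associated to $(A^*,L_\succ^*,-L_\odot^* )$); (c) for all $\zeta,\eta\in A^*$: $T_r(\zeta)\succ T_r(\eta)=T_r\big(L_\circ^*(T_r(\zeta))\eta+R_\odot^*(T_r(\eta))\zeta\big)$ and $T_r(\zeta)\prec T_r(\eta)=T_r\big(-L_\prec^*(T_r(\zeta))\eta-L_\star^*(T_r(\eta))\zeta\big)$ (i.e. $T_r$ is an $\mathcal O$-operator on $(A,\succ,\prec)$ associated to $(A^*,L_\circ^*,R_\odot^*,-L_\prec^*,-L_\star^* )$).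
   Context: All vector spaces are finite-dimensional over a field $k$; $\langle\cdot,\cdot\rangle$ is the natural pairing, $\tau(a\otimes b)=b\otimes a$. A Leibniz-dendriform algebra is a vector space $A$ with bilinear operations $\succ,\prec$ such that, with $x\circ y:=x\succ y+x\prec y$, for all $x,y,z\in A$: $(x\circ y)\succ z=x\succ(y\succ z)-y\succ(x\succ z)$, $y\prec(x\circ z)+(x\succ y)\prec z=x\succ(y\prec z)$, $x\prec(y\circ z)=(x\prec y)\prec z+y\succ(x\prec z)$. Write $x\odot y:=x\succ y+y\prec x$, $x\star y:=x\circ y+y\circ x$. For a binary operation $*$ let $L_*(x)y=x*y$, $R_*(x)y=y*x$, and $L_\odot:=L_\succ+R_\prec$, $R_\odot:=R_\succ+L_\prec$, $L_\star:=L_\circ+R_\circ$. For $f:A\to\mathrm{End}(A)$, $f^*:A\to\mathrm{End}(A^* )$ is $\langle f^*(x)\xi,v\rangle=-\langle\xi,f(x)v\rangle$. For $r=\sum_i a_i\otimes b_i$, $T_r:A^*\to A$ is $\langle T_r(\zeta),\eta\rangle=\langle r,\zeta\otimes\eta\rangle$, and $S(r):=\sum_{i,j}\big(a_i\otimes a_j\otimes (b_j\circ b_i)-a_i\otimes (b_i\odot a_j)\otimes b_j-(a_i\succ a_j)\otimes b_i\otimes b_j\big)$ (the Leibniz-dendriform Yang–Baxter equation is $S(r)=0$). *)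

theory Defs
  imports Main "HOL-Library.Function_Algebras"
begin

text \<open>A finite-dimensional vector space A over a field 'k is represented in coordinates
  with respect to a basis indexed by a finite type 'n: A = ('n => 'k).
  The dual space A* is likewise ('n => 'k), with the natural pairing.
  Tensors in A (x) A are ('n => 'n => 'k), tensors in A (x) A (x) A are ('n => 'n => 'n => 'k).\<close>

type_synonym ('n,'k) vec = "'n \<Rightarrow> 'k"
type_synonym ('n,'k) bilop = "('n,'k) vec \<Rightarrow> ('n,'k) vec \<Rightarrow> ('n,'k) vec"

definition smul :: "'k::field \<Rightarrow> ('n,'k) vec \<Rightarrow> ('n,'k) vec" where
  "smul c x = (\<lambda>i. c * x i)"

definition basis_vec :: "'n \<Rightarrow> ('n,'k::field) vec" where
  "basis_vec p = (\<lambda>q. if q = p then 1 else 0)"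

definition pairing :: "('n::finite,'k::field) vec \<Rightarrow> ('n,'k) vec \<Rightarrow> 'k" where
  "pairing \<xi> v = (\<Sum>i\<in>UNIV. \<xi> i * v i)"

definition bilinear_op :: "('n,'k::field) bilop \<Rightarrow> bool" where
  "bilinear_op f \<longleftrightarrow>
     (\<forall>x y z. f (x + y) z = f x z + f y z) \<and>
     (\<forall>x y z. f x (y + z) = f x y + f x z) \<and>
     (\<forall>c x y. f (smul c x) y = smul c (f x y)) \<and>
     (\<forall>c x y. f x (smul c y) = smul c (f x y))"

definition circ_op :: "('n,'k::field) bilop \<Rightarrow> ('n,'k) bilop \<Rightarrow> ('n,'k) bilop" where
  "circ_op succ prec x y = succ x y + prec x y"

definition leibniz_dendriform :: "('n,'k::field) bilop \<Rightarrow> ('n,'k) bilop \<Rightarrow> bool" where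
  "leibniz_dendriform succ prec \<longleftrightarrow>
     bilinear_op succ \<and> bilinear_op prec \<and>
     (\<forall>x y z.
        succ (circ_op succ prec x y) z = succ x (succ y z) - succ y (succ x z) \<and>
        prec y (circ_op succ prec x z) + prec (succ x y) z = succ x (prec y z) \<and>
        prec x (circ_op succ prec y z) = prec (prec x y) z + succ y (prec x z))"

text \<open>Dual representation: <f^*(x) xi, v> = - <xi, f(x) v>, written in coordinates.\<close>
definition dual_rep :: "(('n::finite,'k::field) vec \<Rightarrow> ('n,'k) vec \<Rightarrow> ('n,'k) vec)
     \<Rightarrow> ('n,'k) vec \<Rightarrow> ('n,'k) vec \<Rightarrow> ('n,'k) vec" where
  "dual_rep f x \<xi> = (\<lambda>j. - pairing \<xi> (f x (basis_vec j)))"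

definition L_odot :: "('n,'k::field) bilop \<Rightarrow> ('n,'k) bilop \<Rightarrow> ('n,'k) bilop" where
  "L_odot succ prec x y = succ x y + prec y x"
definition R_odot :: "('n,'k::field) bilop \<Rightarrow> ('n,'k) bilop \<Rightarrow> ('n,'k) bilop" where
  "R_odot succ prec x y = succ y x + prec x y"
definition L_star :: "('n,'k::field) bilop \<Rightarrow> ('n,'k) bilop \<Rightarrow> ('n,'k) bilop" where
  "L_star succ prec x y = circ_op succ prec x y + circ_op succ prec y x"

text \<open>T_r : A* -> A, <T_r(zeta), eta> = <r, zeta (x) eta>, where r = sum_{p,q} r p q e_p (x) e_q.\<close>
definition T_op :: "('n::finite \<Rightarrow> 'n \<Rightarrow> 'k::field) \<Rightarrow> ('n,'k) vec \<Rightarrow> ('n,'k) vec" where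
  "T_op r \<zeta> = (\<lambda>q. \<Sum>p\<in>UNIV. \<zeta> p * r p q)"

definition skew_symmetric :: "('n \<Rightarrow> 'n \<Rightarrow> 'k::field) \<Rightarrow> bool" where
  "skew_symmetric r \<longleftrightarrow> (\<forall>p q. r q p = - r p q)"

definition tens3 :: "('n,'k::field) vec \<Rightarrow> ('n,'k) vec \<Rightarrow> ('n,'k) vec \<Rightarrow> ('n \<Rightarrow> 'n \<Rightarrow> 'n \<Rightarrow> 'k)" where
  "tens3 x y z = (\<lambda>a b c. x a * y b * z c)"

text \<open>S(r), computed from the representation r = sum_{(p,q)} a_(p,q) (x) b_(p,q) with
  a_(p,q) = e_p and b_(p,q) = r p q e_q.\<close>
definition S_tensor :: "('n::finite,'k::field) bilop \<Rightarrow> ('n,'k) bilop \<Rightarrow> ('n \<Rightarrow> 'n \<Rightarrow> 'k)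
     \<Rightarrow> ('n \<Rightarrow> 'n \<Rightarrow> 'n \<Rightarrow> 'k)" where
  "S_tensor succ prec r =
     (let a = (\<lambda>(p::'n, q::'n). basis_vec p :: ('n,'k) vec);
          b = (\<lambda>(p, q). smul (r p q) (basis_vec q))
      in \<Sum>i\<in>(UNIV :: ('n \<times> 'n) set). \<Sum>j\<in>(UNIV :: ('n \<times> 'n) set).
           tens3 (a i) (a j) (circ_op succ prec (b j) (b i))
         - tens3 (a i) (L_odot succ prec (b i) (a j)) (b j)
         - tens3 (succ (a i) (a j)) (b i) (b j))"

end

theory Submission
  imports Defs
begin

text \<open>Skew-symmetry of r gives \<open><T_r \<xi>, \<theta>> = - <\<xi>, T_r \<theta>>\<close>, which lets every coordinate
  of S(r) be written through T_r alone: \<open><S(r), \<eta> \<otimes> \<zeta> \<otimes> \<theta>>\<close> equals the trilinear form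
  \<open>F(\<zeta>,\<eta>,\<theta>) = <T_r \<zeta> \<circ> T_r \<eta>, \<theta>> - <T_r \<zeta> \<succ> T_r \<theta>, \<eta>> + <T_r \<eta> \<odot> T_r \<theta>, \<zeta>>\<close>.
  Pairing the identity (b) with \<theta> and moving T_r and the dual representations across the pairing
  turns it into \<open>F(\<zeta>,\<eta>,\<theta>) = 0\<close>; in the same way the \<open>\<succ>\<close>-identity of (c) becomes
  \<open>F(\<zeta>,\<theta>,\<eta>) = 0\<close> and the \<open>\<prec>\<close>-identity becomes \<open>F(\<zeta>,\<eta>,\<theta>) + F(\<zeta>,\<theta>,\<eta>) = 0\<close>.
  So (a), (b) and (c) all say that F vanishes.\<close>

lemma sum_fun_apply: "sum f A x = (\<Sum>i\<in>A. f i x)"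
  by (induction A rule: infinite_finite_induct) auto

lemma smul_apply: "smul c x i = c * x i"
  by (simp add: smul_def)

lemma smul_add: "smul c (x + y) = smul c x + smul c y"
  by (rule ext) (simp add: smul_def algebra_simps)

lemma basis_vec_apply: "basis_vec p q = (if p = q then 1 else 0)"
  by (simp add: basis_vec_def)

lemma mult_if_zero_left: "(if P then x else 0) * (y::'a::mult_zero) = (if P then x * y else 0)"
  by simp

lemma mult_if_zero_right: "(y::'a::mult_zero) * (if P then x else 0) = (if P then y * x else 0)"
  by simp

lemma sum_if_zero: "(\<Sum>x\<in>A. if P then g x else 0) = (if P then (\<Sum>x\<in>A. g x) else 0)"
  by simp

lemma vec_eq_sum_basis_vec: "(x::('n::finite,'k::field) vec) = (\<Sum>p\<in>UNIV. smul (x p) (basis_vec p))"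
  by (rule ext) (simp add: sum_fun_apply smul_apply basis_vec_apply mult_if_zero_right)

definition linear_form :: "(('n,'k::field) vec \<Rightarrow> 'k) \<Rightarrow> bool" where
  "linear_form g \<longleftrightarrow> (\<forall>x y. g (x + y) = g x + g y) \<and> (\<forall>c x. g (smul c x) = c * g x)"

lemma linear_form_sum:
  assumes "linear_form g"
  shows "g (\<Sum>i\<in>I. h i) = (\<Sum>i\<in>I. g (h i))"
proof -
  have additive: "g (x + y) = g x + g y" for x y
    using assms by (simp add: linear_form_def)
  then have "g 0 = 0"
    by (metis add_0 add_cancel_right_right)
  with additive show ?thesis
    by (induction I rule: infinite_finite_induct) simp_all
qed

lemma linear_form_eq_sum_basis_vec:
  fixes x :: "('n::finite,'k::field) vec"
  assumes "linear_form g"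
  shows "g x = (\<Sum>p\<in>UNIV. x p * g (basis_vec p))"
proof -
  have "g x = g (\<Sum>p\<in>UNIV. smul (x p) (basis_vec p))"
    by (rule arg_cong[where f = g, OF vec_eq_sum_basis_vec])
  also have "\<dots> = (\<Sum>p\<in>UNIV. x p * g (basis_vec p))"
    using assms by (simp add: linear_form_sum) (simp add: linear_form_def)
  finally show ?thesis .
qed

lemma linear_form_eq_0_on_basis:
  fixes x :: "('n::finite,'k::field) vec"
  assumes "linear_form g" and "\<And>p. g (basis_vec p) = 0"
  shows "g x = 0"
  using linear_form_eq_sum_basis_vec[OF assms(1), of x] assms(2) by simp

lemma trilinear_form_eq_0_on_basis:
  fixes F :: "('n::finite,'k::field) vec \<Rightarrow> ('n,'k) vec \<Rightarrow> ('n,'k) vec \<Rightarrow> 'k"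
  assumes "\<And>y z. linear_form (\<lambda>x. F x y z)"
    and "\<And>x z. linear_form (\<lambda>y. F x y z)"
    and "\<And>x y. linear_form (\<lambda>z. F x y z)"
    and "\<And>p q s. F (basis_vec p) (basis_vec q) (basis_vec s) = 0"
  shows "F x y z = 0"
proof -
  have "F (basis_vec p) (basis_vec q) z = 0" for p q
    by (rule linear_form_eq_0_on_basis[OF assms(3)]) (rule assms(4))
  then have "F (basis_vec p) y z = 0" for p
    by (rule linear_form_eq_0_on_basis[OF assms(2)])
  then show ?thesis
    by (rule linear_form_eq_0_on_basis[OF assms(1)])
qed

lemma bilinear_op_add_left: "bilinear_op f \<Longrightarrow> f (x + y) z = f x z + f y z"
  by (simp add: bilinear_op_def)

lemma bilinear_op_add_right: "bilinear_op f \<Longrightarrow> f x (y + z) = f x y + f x z"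
  by (simp add: bilinear_op_def)

lemma bilinear_op_smul_left: "bilinear_op f \<Longrightarrow> f (smul c x) y = smul c (f x y)"
  by (simp add: bilinear_op_def)

lemma bilinear_op_smul_right: "bilinear_op f \<Longrightarrow> f x (smul c y) = smul c (f x y)"
  by (simp add: bilinear_op_def)

lemma bilinear_op_apply_eq_sum:
  fixes f :: "('n::finite,'k::field) bilop"
  assumes "bilinear_op f"
  shows "f x y s = (\<Sum>p\<in>UNIV. \<Sum>q\<in>UNIV. x p * y q * f (basis_vec p) (basis_vec q) s)"
proof -
  have left: "linear_form (\<lambda>x. f x y s)" for y
    using assms by (simp add: linear_form_def bilinear_op_add_left bilinear_op_smul_left smul_apply)
  have right: "linear_form (\<lambda>y. f x y s)" for x
    using assms by (simp add: linear_form_def bilinear_op_add_right bilinear_op_smul_right smul_apply)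
  have "f x y s = (\<Sum>p\<in>UNIV. x p * f (basis_vec p) y s)"
    by (rule linear_form_eq_sum_basis_vec[OF left])
  also have "\<dots> = (\<Sum>p\<in>UNIV. x p * (\<Sum>q\<in>UNIV. y q * f (basis_vec p) (basis_vec q) s))"
    by (simp only: linear_form_eq_sum_basis_vec[OF right, of _ y])
  finally show ?thesis
    by (simp add: sum_distrib_left mult_ac)
qed

lemma bilinear_op_circ_op:
  "bilinear_op succ \<Longrightarrow> bilinear_op prec \<Longrightarrow> bilinear_op (circ_op succ prec)"
  unfolding bilinear_op_def circ_op_def by (simp add: smul_add algebra_simps)

lemma bilinear_op_L_odot:
  "bilinear_op succ \<Longrightarrow> bilinear_op prec \<Longrightarrow> bilinear_op (L_odot succ prec)"
  unfolding bilinear_op_def L_odot_def by (simp add: smul_add algebra_simps)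

lemma bilinear_op_R_odot:
  "bilinear_op succ \<Longrightarrow> bilinear_op prec \<Longrightarrow> bilinear_op (R_odot succ prec)"
  unfolding bilinear_op_def R_odot_def by (simp add: smul_add algebra_simps)

lemma bilinear_op_L_star:
  "bilinear_op succ \<Longrightarrow> bilinear_op prec \<Longrightarrow> bilinear_op (L_star succ prec)"
  unfolding bilinear_op_def L_star_def circ_op_def by (simp add: smul_add algebra_simps)

lemma R_odot_eq_L_odot_swap: "R_odot succ prec x y = L_odot succ prec y x"
  by (simp add: R_odot_def L_odot_def)

lemma pairing_add_left: "pairing (x + y) v = pairing x v + pairing y v"
  by (simp add: pairing_def sum.distrib algebra_simps)

lemma pairing_add_right: "pairing v (x + y) = pairing v x + pairing v y"
  by (simp add: pairing_def sum.distrib algebra_simps)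

lemma pairing_diff_left: "pairing (x - y) v = pairing x v - pairing y v"
  by (simp add: pairing_def sum_subtractf algebra_simps)

lemma pairing_uminus_left: "pairing (- x) v = - pairing x v"
  by (simp add: pairing_def sum_negf)

lemma pairing_smul_left: "pairing (smul c x) v = c * pairing x v"
  by (simp add: pairing_def smul_def sum_distrib_left algebra_simps)

lemma pairing_smul_right: "pairing v (smul c x) = c * pairing v x"
  by (simp add: pairing_def smul_def sum_distrib_left algebra_simps)

lemma pairing_basis_vec: "pairing v (basis_vec j) = v j"
  by (simp add: pairing_def basis_vec_apply mult_if_zero_right)

lemma vec_eq_iff_pairing:
  fixes v w :: "('n::finite,'k::field) vec"
  shows "v = w \<longleftrightarrow> (\<forall>\<theta>. pairing v \<theta> = pairing w \<theta>)"
  by (metis ext pairing_basis_vec)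

lemma pairing_dual_rep:
  fixes f :: "('n::finite,'k::field) bilop"
  assumes "bilinear_op f"
  shows "pairing (dual_rep f x \<xi>) v = - pairing (f x v) \<xi>"
proof -
  have "linear_form (\<lambda>v. pairing (f x v) \<xi>)"
    using assms by (simp add: linear_form_def bilinear_op_add_right bilinear_op_smul_right
        pairing_add_left pairing_smul_left del: plus_fun_apply)
  then have "pairing (f x v) \<xi> = (\<Sum>j\<in>UNIV. v j * pairing (f x (basis_vec j)) \<xi>)"
    by (rule linear_form_eq_sum_basis_vec)
  then show ?thesis
    by (simp add: pairing_def dual_rep_def sum_negf mult_ac)
qed

lemma T_op_add: "T_op r (x + y) = T_op r x + T_op r y"
  by (rule ext) (simp add: T_op_def sum.distrib algebra_simps)

lemma T_op_smul: "T_op r (smul c x) = smul c (T_op r x)"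
  by (rule ext) (simp add: T_op_def smul_def sum_distrib_left algebra_simps)

lemma T_op_basis_vec: "T_op r (basis_vec p) = r p"
  by (rule ext) (simp add: T_op_def basis_vec_apply mult_if_zero_left)

lemma skew_symmetric_swap: "skew_symmetric r \<Longrightarrow> r q p = - r p q"
  unfolding skew_symmetric_def by blast

lemma pairing_T_op_skew:
  assumes "skew_symmetric r"
  shows "pairing (T_op r \<xi>) \<theta> = - pairing \<xi> (T_op r \<theta>)"
proof -
  have r_swap: "\<xi> p * r p q * \<theta> q = - (\<xi> p * (\<theta> q * r q p))" for p q
    by (simp add: skew_symmetric_swap[OF assms, of p q])
  have "pairing (T_op r \<xi>) \<theta> = (\<Sum>q\<in>UNIV. \<Sum>p\<in>UNIV. \<xi> p * r p q * \<theta> q)"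
    by (simp add: pairing_def T_op_def sum_distrib_right)
  also have "\<dots> = (\<Sum>p\<in>UNIV. \<Sum>q\<in>UNIV. \<xi> p * r p q * \<theta> q)"
    by (rule sum.swap)
  also have "\<dots> = - pairing \<xi> (T_op r \<theta>)"
    by (simp add: r_swap sum_negf pairing_def T_op_def sum_distrib_left)
  finally show ?thesis .
qed

lemma sum_UNIV_prod:
  "sum g (UNIV :: ('a::finite \<times> 'b::finite) set) = (\<Sum>p\<in>UNIV. \<Sum>q\<in>UNIV. g (p, q))"
  by (simp add: sum.cartesian_product UNIV_Times_UNIV)

lemma S_tensor_apply_eq_sums:
  "S_tensor succ prec r a b c =
     (\<Sum>p\<in>UNIV. \<Sum>q\<in>UNIV. \<Sum>p'\<in>UNIV. \<Sum>q'\<in>UNIV.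
        basis_vec p a * basis_vec p' b
        * circ_op succ prec (smul (r p' q') (basis_vec q')) (smul (r p q) (basis_vec q)) c)
   - (\<Sum>p\<in>UNIV. \<Sum>q\<in>UNIV. \<Sum>p'\<in>UNIV. \<Sum>q'\<in>UNIV.
        basis_vec p a * L_odot succ prec (smul (r p q) (basis_vec q)) (basis_vec p') b
        * smul (r p' q') (basis_vec q') c)
   - (\<Sum>p\<in>UNIV. \<Sum>q\<in>UNIV. \<Sum>p'\<in>UNIV. \<Sum>q'\<in>UNIV.
        succ (basis_vec p) (basis_vec p') a * smul (r p q) (basis_vec q) b
        * smul (r p' q') (basis_vec q') c)"
  unfolding S_tensor_def Let_def sum_UNIV_prod
  by (simp only: sum_fun_apply prod.case tens3_def fun_diff_def sum_subtractf)

lemma S_tensor_first_sum: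
  fixes f :: "('n::finite,'k::field) bilop"
  assumes "bilinear_op f"
  shows "(\<Sum>p\<in>UNIV. \<Sum>q\<in>UNIV. \<Sum>p'\<in>UNIV. \<Sum>q'\<in>UNIV.
            basis_vec p a * basis_vec p' b * f (smul (r p' q') (basis_vec q')) (smul (r p q) (basis_vec q)) c)
         = f (T_op r (basis_vec b)) (T_op r (basis_vec a)) c"
proof -
  have "(\<Sum>p\<in>UNIV. \<Sum>q\<in>UNIV. \<Sum>p'\<in>UNIV. \<Sum>q'\<in>UNIV.
            basis_vec p a * basis_vec p' b * f (smul (r p' q') (basis_vec q')) (smul (r p q) (basis_vec q)) c)
        = (\<Sum>q\<in>UNIV. \<Sum>q'\<in>UNIV. r a q * (r b q' * f (basis_vec q') (basis_vec q) c))"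
    by (simp add: bilinear_op_smul_left[OF assms] bilinear_op_smul_right[OF assms]
        smul_apply basis_vec_apply mult_if_zero_left mult_if_zero_right sum_if_zero)
  also have "\<dots> = (\<Sum>q'\<in>UNIV. \<Sum>q\<in>UNIV. r b q' * r a q * f (basis_vec q') (basis_vec q) c)"
    by (subst sum.swap) (simp add: mult_ac)
  also have "\<dots> = f (T_op r (basis_vec b)) (T_op r (basis_vec a)) c"
    by (simp add: T_op_basis_vec bilinear_op_apply_eq_sum[OF assms, of "r b"])
  finally show ?thesis .
qed

lemma S_tensor_second_sum:
  fixes f :: "('n::finite,'k::field) bilop"
  assumes "bilinear_op f" and "skew_symmetric r"
  shows "(\<Sum>p\<in>UNIV. \<Sum>q\<in>UNIV. \<Sum>p'\<in>UNIV. \<Sum>q'\<in>UNIV.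
            basis_vec p a * f (smul (r p q) (basis_vec q)) (basis_vec p') b * smul (r p' q') (basis_vec q') c)
         = - f (T_op r (basis_vec a)) (T_op r (basis_vec c)) b"
proof -
  have r_swap: "r a q * f (basis_vec q) (basis_vec p') b * r p' c
      = - (r a q * r c p' * f (basis_vec q) (basis_vec p') b)" for q p'
    by (simp add: skew_symmetric_swap[OF assms(2), of p' c])
  have "(\<Sum>p\<in>UNIV. \<Sum>q\<in>UNIV. \<Sum>p'\<in>UNIV. \<Sum>q'\<in>UNIV.
            basis_vec p a * f (smul (r p q) (basis_vec q)) (basis_vec p') b * smul (r p' q') (basis_vec q') c)
        = (\<Sum>q\<in>UNIV. \<Sum>p'\<in>UNIV. r a q * f (basis_vec q) (basis_vec p') b * r p' c)"
    by (simp add: bilinear_op_smul_left[OF assms(1)] smul_apply basis_vec_apply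
        mult_if_zero_left mult_if_zero_right sum_if_zero)
  also have "\<dots> = - f (T_op r (basis_vec a)) (T_op r (basis_vec c)) b"
    by (simp only: r_swap sum_negf) (simp add: T_op_basis_vec bilinear_op_apply_eq_sum[OF assms(1), of "r a"])
  finally show ?thesis .
qed

lemma S_tensor_third_sum:
  fixes f :: "('n::finite,'k::field) bilop"
  assumes "bilinear_op f" and "skew_symmetric r"
  shows "(\<Sum>p\<in>UNIV. \<Sum>q\<in>UNIV. \<Sum>p'\<in>UNIV. \<Sum>q'\<in>UNIV.
            f (basis_vec p) (basis_vec p') a * smul (r p q) (basis_vec q) b * smul (r p' q') (basis_vec q') c)
         = f (T_op r (basis_vec b)) (T_op r (basis_vec c)) a"
proof -
  have r_swap: "f (basis_vec p) (basis_vec p') a * r p b * r p' c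
      = r b p * r c p' * f (basis_vec p) (basis_vec p') a" for p p'
    by (simp add: skew_symmetric_swap[OF assms(2), of p b] skew_symmetric_swap[OF assms(2), of p' c])
  have "(\<Sum>p\<in>UNIV. \<Sum>q\<in>UNIV. \<Sum>p'\<in>UNIV. \<Sum>q'\<in>UNIV.
            f (basis_vec p) (basis_vec p') a * smul (r p q) (basis_vec q) b * smul (r p' q') (basis_vec q') c)
        = (\<Sum>p\<in>UNIV. \<Sum>p'\<in>UNIV. f (basis_vec p) (basis_vec p') a * r p b * r p' c)"
    by (simp add: smul_apply basis_vec_apply mult_if_zero_left mult_if_zero_right sum_if_zero)
  also have "\<dots> = f (T_op r (basis_vec b)) (T_op r (basis_vec c)) a"
    by (simp only: r_swap) (simp add: T_op_basis_vec bilinear_op_apply_eq_sum[OF assms(1), of "r b"])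
  finally show ?thesis .
qed

definition S_form :: "('n::finite,'k::field) bilop \<Rightarrow> ('n,'k) bilop \<Rightarrow> ('n \<Rightarrow> 'n \<Rightarrow> 'k)
    \<Rightarrow> ('n,'k) vec \<Rightarrow> ('n,'k) vec \<Rightarrow> ('n,'k) vec \<Rightarrow> 'k" where
  "S_form succ prec r \<zeta> \<eta> \<theta> =
     pairing (circ_op succ prec (T_op r \<zeta>) (T_op r \<eta>)) \<theta>
   - pairing (succ (T_op r \<zeta>) (T_op r \<theta>)) \<eta>
   + pairing (L_odot succ prec (T_op r \<eta>) (T_op r \<theta>)) \<zeta>"

lemma S_tensor_apply:
  assumes "bilinear_op succ" and "bilinear_op prec" and "skew_symmetric r"
  shows "S_tensor succ prec r a b c = S_form succ prec r (basis_vec b) (basis_vec a) (basis_vec c)"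
  unfolding S_tensor_apply_eq_sums S_form_def pairing_basis_vec
    S_tensor_first_sum[OF bilinear_op_circ_op[OF assms(1,2)]]
    S_tensor_second_sum[OF bilinear_op_L_odot[OF assms(1,2)] assms(3)]
    S_tensor_third_sum[OF assms(1,3)]
  by simp
lemma S_form_trilinear:
  assumes "bilinear_op succ" and "bilinear_op prec"
  shows "linear_form (\<lambda>\<zeta>. S_form succ prec r \<zeta> \<eta> \<theta>)"
    and "linear_form (\<lambda>\<eta>. S_form succ prec r \<zeta> \<eta> \<theta>)"
    and "linear_form (\<lambda>\<theta>. S_form succ prec r \<zeta> \<eta> \<theta>)"
  using assms bilinear_op_circ_op[OF assms] bilinear_op_L_odot[OF assms]
  by (simp_all add: linear_form_def S_form_def T_op_add T_op_smul
      bilinear_op_add_left bilinear_op_add_right bilinear_op_smul_left bilinear_op_smul_right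
      pairing_add_left pairing_add_right pairing_smul_left pairing_smul_right
      algebra_simps del: plus_fun_apply)

lemma S_tensor_eq_0_iff_S_form:
  assumes "bilinear_op succ" and "bilinear_op prec" and "skew_symmetric r"
  shows "S_tensor succ prec r = 0 \<longleftrightarrow> (\<forall>\<zeta> \<eta> \<theta>. S_form succ prec r \<zeta> \<eta> \<theta> = 0)"
proof
  assume "S_tensor succ prec r = 0"
  then have "S_form succ prec r (basis_vec p) (basis_vec q) (basis_vec s) = 0" for p q s
    using S_tensor_apply[OF assms, of q p s] by simp
  then show "\<forall>\<zeta> \<eta> \<theta>. S_form succ prec r \<zeta> \<eta> \<theta> = 0"
    using trilinear_form_eq_0_on_basis[OF S_form_trilinear[OF assms(1,2)]] by blast
next
  assume "\<forall>\<zeta> \<eta> \<theta>. S_form succ prec r \<zeta> \<eta> \<theta> = 0"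
  then show "S_tensor succ prec r = 0"
    by (intro ext) (simp add: S_tensor_apply[OF assms])
qed

lemma O_operator_Leibniz_iff_S_form:
  assumes "bilinear_op succ" and "bilinear_op prec" and "skew_symmetric r"
  shows "(\<forall>\<zeta> \<eta>. circ_op succ prec (T_op r \<zeta>) (T_op r \<eta>) =
            T_op r (dual_rep succ (T_op r \<zeta>) \<eta> - dual_rep (L_odot succ prec) (T_op r \<eta>) \<zeta>))
     \<longleftrightarrow> (\<forall>\<zeta> \<eta> \<theta>. S_form succ prec r \<zeta> \<eta> \<theta> = 0)"
proof -
  have "pairing (circ_op succ prec (T_op r \<zeta>) (T_op r \<eta>)) \<theta> =
        pairing (T_op r (dual_rep succ (T_op r \<zeta>) \<eta> - dual_rep (L_odot succ prec) (T_op r \<eta>) \<zeta>)) \<theta>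
      \<longleftrightarrow> S_form succ prec r \<zeta> \<eta> \<theta> = 0" for \<zeta> \<eta> \<theta>
    unfolding pairing_T_op_skew[OF assms(3)] pairing_diff_left pairing_dual_rep[OF assms(1)]
      pairing_dual_rep[OF bilinear_op_L_odot[OF assms(1,2)]] S_form_def
    by (simp add: algebra_simps)
  then show ?thesis
    by (simp add: vec_eq_iff_pairing[where v = "circ_op succ prec (T_op r _) (T_op r _)"])
qed

lemma O_operator_dendriform_iff_S_form:
  assumes "bilinear_op succ" and "bilinear_op prec" and "skew_symmetric r"
  shows "(\<forall>\<zeta> \<eta>. succ (T_op r \<zeta>) (T_op r \<eta>) =
               T_op r (dual_rep (circ_op succ prec) (T_op r \<zeta>) \<eta> + dual_rep (R_odot succ prec) (T_op r \<eta>) \<zeta>)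
             \<and> prec (T_op r \<zeta>) (T_op r \<eta>) =
               T_op r (- dual_rep prec (T_op r \<zeta>) \<eta> - dual_rep (L_star succ prec) (T_op r \<eta>) \<zeta>))
     \<longleftrightarrow> (\<forall>\<zeta> \<eta> \<theta>. S_form succ prec r \<zeta> \<eta> \<theta> = 0)"
proof -
  have succ_iff: "pairing (succ (T_op r \<zeta>) (T_op r \<eta>)) \<theta> =
        pairing (T_op r (dual_rep (circ_op succ prec) (T_op r \<zeta>) \<eta> + dual_rep (R_odot succ prec) (T_op r \<eta>) \<zeta>)) \<theta>
      \<longleftrightarrow> S_form succ prec r \<zeta> \<theta> \<eta> = 0" for \<zeta> \<eta> \<theta>
    unfolding pairing_T_op_skew[OF assms(3)] pairing_add_left
      pairing_dual_rep[OF bilinear_op_circ_op[OF assms(1,2)]]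
      pairing_dual_rep[OF bilinear_op_R_odot[OF assms(1,2)]] S_form_def R_odot_eq_L_odot_swap
    by (simp add: algebra_simps) (rule eq_commute)
  have prec_iff: "pairing (prec (T_op r \<zeta>) (T_op r \<eta>)) \<theta> =
        pairing (T_op r (- dual_rep prec (T_op r \<zeta>) \<eta> - dual_rep (L_star succ prec) (T_op r \<eta>) \<zeta>)) \<theta>
      \<longleftrightarrow> S_form succ prec r \<zeta> \<eta> \<theta> + S_form succ prec r \<zeta> \<theta> \<eta> = 0" for \<zeta> \<eta> \<theta>
    unfolding pairing_T_op_skew[OF assms(3)] pairing_diff_left pairing_uminus_left
      pairing_dual_rep[OF assms(2)] pairing_dual_rep[OF bilinear_op_L_star[OF assms(1,2)]] S_form_def
    by (simp add: L_star_def L_odot_def circ_op_def pairing_add_left algebra_simps eq_neg_iff_add_eq_0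
        del: plus_fun_apply)
  show ?thesis
    unfolding vec_eq_iff_pairing[where v = "succ (T_op r _) (T_op r _)"]
      vec_eq_iff_pairing[where v = "prec (T_op r _) (T_op r _)"] succ_iff prec_iff
    by auto
qed

theorem mainTheorem3:
  fixes succ prec :: "('n::finite, 'k::field) bilop"
    and r :: "'n \<Rightarrow> 'n \<Rightarrow> 'k"
  assumes "leibniz_dendriform succ prec"
    and "skew_symmetric r"
  shows "(S_tensor succ prec r = 0 \<longleftrightarrow>
            (\<forall>\<zeta> \<eta>. circ_op succ prec (T_op r \<zeta>) (T_op r \<eta>) =
               T_op r (dual_rep succ (T_op r \<zeta>) \<eta> - dual_rep (L_odot succ prec) (T_op r \<eta>) \<zeta>)))
       \<and> (S_tensor succ prec r = 0 \<longleftrightarrow>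
            (\<forall>\<zeta> \<eta>. succ (T_op r \<zeta>) (T_op r \<eta>) =
               T_op r (dual_rep (circ_op succ prec) (T_op r \<zeta>) \<eta> + dual_rep (R_odot succ prec) (T_op r \<eta>) \<zeta>)
             \<and> prec (T_op r \<zeta>) (T_op r \<eta>) =
               T_op r (- dual_rep prec (T_op r \<zeta>) \<eta> - dual_rep (L_star succ prec) (T_op r \<eta>) \<zeta>)))"
proof -
  have bilinear: "bilinear_op succ" "bilinear_op prec"
    using assms(1) unfolding leibniz_dendriform_def by auto
  show ?thesis
    unfolding S_tensor_eq_0_iff_S_form[OF bilinear assms(2)]
      O_operator_Leibniz_iff_S_form[OF bilinear assms(2)]
      O_operator_dendriform_iff_S_form[OF bilinear assms(2)]
    by simp
qed

end
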